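(* In the setting of the context, for any $t\ge0$, \[ K(t)\le K(0)+Ct+C\varepsilon\,\overline{E}(t)+C\int_0^t\overline{E}(s)\,ds. \]
   Context: Setting: $d\ge1$, $0\le\alpha<1$, $F:\mathbb{R}^d\setminus\{0\}\to\mathbb{R}^d$ with $|F(x)|\le C_F|x|^{-\alpha}$, $|\nabla F(x)|\le C_F|x|^{-1-\alpha}$, $|\nabla^2F(x)|\le C_F|x|^{-2-\alpha}$. $(X_i,V_i)_{i\le N}$ is a classical (collision-free) solution of $\dot X_i=V_i$, $\dot V_i=E(X_i):=\frac1N\sum_{j\ne i}F(X_i-X_j)$. $K(T)=\sup_{t\le T,i}|V_i(t)|$, $R(0)=\sup_i|X_i(0)|$, $\varepsilon=R(0)/N^{1/(2d)}$. $\overline{E}(T)=\sup_{t\in[0,T-\varepsilon],i}\frac1\varepsilon\int_t^{t+\varepsilon}|E(X_i(s))|ds$ if $T\ge\varepsilon$, and $\sup_i\frac1\varepsilon\int_0^T|E(X_i(s))|ds$ if $T<\varepsilon$. $C$ denotes a constant independent of $N$. *)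

theory Defs
  imports "HOL-Analysis.Analysis"
begin

text \<open>Particles are indexed by i in {1..N}; X i t and V i t are position and velocity
  of particle i at time t, taking values in the Euclidean space 'a of dimension d = DIM('a).\<close>

definition field :: "nat \<Rightarrow> ('a::euclidean_space \<Rightarrow> 'a) \<Rightarrow> (nat \<Rightarrow> real \<Rightarrow> 'a) \<Rightarrow> nat \<Rightarrow> real \<Rightarrow> 'a" where
  "field N F X i t = (1 / real N) *\<^sub>R (\<Sum>j\<in>{1..N} - {i}. F (X i t - X j t))"

definition particle_solution ::
  "nat \<Rightarrow> ('a::euclidean_space \<Rightarrow> 'a) \<Rightarrow> (nat \<Rightarrow> real \<Rightarrow> 'a) \<Rightarrow> (nat \<Rightarrow> real \<Rightarrow> 'a) \<Rightarrow> bool" where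
  "particle_solution N F X V \<longleftrightarrow>
     (\<forall>i\<in>{1..N}. \<forall>t\<ge>0.
        (X i has_vector_derivative V i t) (at t within {0..}) \<and>
        (V i has_vector_derivative field N F X i t) (at t within {0..})) \<and>
     (\<forall>i\<in>{1..N}. \<forall>j\<in>{1..N}. i \<noteq> j \<longrightarrow> (\<forall>t\<ge>0. X i t \<noteq> X j t))"

definition Kvel :: "nat \<Rightarrow> (nat \<Rightarrow> real \<Rightarrow> 'a::real_normed_vector) \<Rightarrow> real \<Rightarrow> real" where
  "Kvel N V T = (SUP p\<in>{0..T} \<times> {1..N}. norm (V (snd p) (fst p)))"

definition eps :: "nat \<Rightarrow> (nat \<Rightarrow> real \<Rightarrow> 'a::euclidean_space) \<Rightarrow> real" where
  "eps N X = (SUP i\<in>{1..N}. norm (X i 0)) / (real N powr (1 / (2 * real DIM('a))))"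

definition Ebar :: "nat \<Rightarrow> ('a::euclidean_space \<Rightarrow> 'a) \<Rightarrow> (nat \<Rightarrow> real \<Rightarrow> 'a) \<Rightarrow> real \<Rightarrow> real" where
  "Ebar N F X T =
     (let e = eps N X in
      if T \<ge> e then
        (SUP p\<in>{0..T - e} \<times> {1..N}.
           (1 / e) * integral {fst p..fst p + e} (\<lambda>s. norm (field N F X (snd p) s)))
      else
        (SUP i\<in>{1..N}. (1 / e) * integral {0..T} (\<lambda>s. norm (field N F X i s))))"

end

theory Submission
  imports Defs
begin

text \<open>Integrating \<open>\<dot>V\<^sub>i = E(X\<^sub>i)\<close> gives \<open>|V\<^sub>i(t)| \<le> |V\<^sub>i(0)| + \<integral>\<^sub>0\<^sup>t |E(X\<^sub>i)|\<close>, so it suffices to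
  bound \<open>\<integral>\<^sub>0\<^sup>t g\<close> for a nonnegative \<open>g\<close> by its sliding window averages \<open>W(s)\<close> of width \<open>\<epsilon>\<close>:
  cut \<open>[0,t]\<close> into windows \<open>[t - (k+1)\<epsilon>, t - k\<epsilon>]\<close> from the right. The window ending at time \<open>s\<close>
  contributes at most \<open>\<epsilon> W(s)\<close>, and since \<open>W\<close> is nondecreasing, \<open>\<epsilon> W(s - \<epsilon>) \<le> \<integral>\<^sub>s\<^sub>-\<^sub>\<epsilon>\<^sup>s W\<close>.
  Hence \<open>\<integral>\<^sub>0\<^sup>t g \<le> \<epsilon> W(t) + \<integral>\<^sub>0\<^sup>t W\<close>, i.e. the theorem holds with \<open>C = 1\<close>; of the
  hypotheses on \<open>F\<close> only its continuity away from the origin is needed.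
  The only degenerate case, \<open>\<epsilon> = 0\<close>, forces a single particle, which feels no force.\<close>

definition window_sup :: "real \<Rightarrow> ('i \<Rightarrow> real \<Rightarrow> real) \<Rightarrow> 'i set \<Rightarrow> real \<Rightarrow> real" where
  "window_sup e g I T =
     (if T \<ge> e then (SUP p\<in>{0..T - e} \<times> I. (1 / e) * integral {fst p..fst p + e} (g (snd p)))
      else (SUP i\<in>I. (1 / e) * integral {0..T} (g i)))"

lemma window_sup_nonpos_width:
  assumes "e \<le> 0" "0 \<le> T" "I \<noteq> {}"
  shows "window_sup e g I T = 0"
proof -
  have windows_vanish: "(\<lambda>q. (1 / e) * integral {fst q..fst q + e} (g (snd q))) = (\<lambda>_. 0)"
    using assms(1) by (cases "e = 0") auto
  moreover have "{0..T - e} \<times> I \<noteq> {}"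
    using assms by auto
  ultimately show ?thesis
    using assms unfolding window_sup_def windows_vanish by simp
qed

locale window_averages =
  fixes e :: real and g :: "'i \<Rightarrow> real \<Rightarrow> real" and I :: "'i set"
  assumes width_pos: "e > 0"
    and finite_index: "finite I" and index_nonempty: "I \<noteq> {}"
    and integrable: "\<And>i b. i \<in> I \<Longrightarrow> g i integrable_on {0..b}"
    and nonneg: "\<And>i s. i \<in> I \<Longrightarrow> 0 \<le> s \<Longrightarrow> 0 \<le> g i s"
begin

abbreviation W :: "real \<Rightarrow> real" where
  "W \<equiv> window_sup e g I"

lemma integrable_interval: "i \<in> I \<Longrightarrow> 0 \<le> a \<Longrightarrow> g i integrable_on {a..b}"
  by (rule integrable_on_subinterval[OF integrable]) auto

lemma integral_mono_interval:
  "i \<in> I \<Longrightarrow> 0 \<le> a \<Longrightarrow> a \<le> c \<Longrightarrow> d \<le> b \<Longrightarrow> integral {c..d} (g i) \<le> integral {a..b} (g i)"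
  by (rule integral_subset_le) (auto intro: integrable_interval nonneg)

lemma window_le_window_sup:
  assumes "e \<le> T" "i \<in> I" "0 \<le> p" "p \<le> T - e"
  shows "(1 / e) * integral {p..p + e} (g i) \<le> W T"
proof -
  have "bdd_above ((\<lambda>q. (1 / e) * integral {fst q..fst q + e} (g (snd q))) ` ({0..T - e} \<times> I))"
  proof (rule bdd_aboveI2)
    fix q assume q: "q \<in> {0..T - e} \<times> I"
    have "integral {fst q..fst q + e} (g (snd q)) \<le> integral {0..T} (g (snd q))"
      using q by (intro integral_mono_interval) auto
    also have "\<dots> \<le> (\<Sum>j\<in>I. integral {0..T} (g j))"
      using q finite_index
      by (intro member_le_sum) (auto intro!: integral_nonneg integrable_interval nonneg)
    finally show "(1 / e) * integral {fst q..fst q + e} (g (snd q))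
        \<le> (1 / e) * (\<Sum>j\<in>I. integral {0..T} (g j))"
      using width_pos by (intro mult_left_mono) auto
  qed
  then show ?thesis
    using assms unfolding window_sup_def by (auto intro!: cSUP_upper2[where x = "(p, i)"])
qed

lemma initial_window_le_window_sup:
  assumes "T < e" "i \<in> I"
  shows "(1 / e) * integral {0..T} (g i) \<le> W T"
  using assms finite_index unfolding window_sup_def by (auto intro!: cSUP_upper)

lemma window_sup_nonneg:
  assumes "0 \<le> T"
  shows "0 \<le> W T"
proof -
  obtain i where i: "i \<in> I"
    using index_nonempty by auto
  show ?thesis
  proof (cases "e \<le> T")
    case True
    have "0 \<le> (1 / e) * integral {0..0 + e} (g i)"
      using width_pos i by (intro mult_nonneg_nonneg integral_nonneg integrable_interval nonneg) auto
    also have "\<dots> \<le> W T"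
      using True i by (intro window_le_window_sup) auto
    finally show ?thesis .
  next
    case False
    have "0 \<le> (1 / e) * integral {0..T} (g i)"
      using assms width_pos i by (intro mult_nonneg_nonneg integral_nonneg integrable_interval nonneg) auto
    also have "\<dots> \<le> W T"
      using False i by (intro initial_window_le_window_sup) auto
    finally show ?thesis .
  qed
qed

lemma window_sup_mono:
  assumes "0 \<le> s" "s \<le> s'"
  shows "W s \<le> W s'"
proof (cases "e \<le> s'")
  case False
  have "(1 / e) * integral {0..s} (g i) \<le> (1 / e) * integral {0..s'} (g i)" if "i \<in> I" for i
    using that assms width_pos by (intro mult_left_mono integral_mono_interval) auto
  then have "(SUP i\<in>I. (1 / e) * integral {0..s} (g i)) \<le> (SUP i\<in>I. (1 / e) * integral {0..s'} (g i))"
    using finite_index index_nonempty by (intro cSUP_mono) auto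
  then show ?thesis
    using False assms unfolding window_sup_def by auto
next
  case s'_ge: True
  show ?thesis
  proof (cases "e \<le> s")
    case True
    have "W s = (SUP q\<in>{0..s - e} \<times> I. (1 / e) * integral {fst q..fst q + e} (g (snd q)))"
      using True unfolding window_sup_def by auto
    also have "\<dots> \<le> W s'"
    proof (rule cSUP_least)
      show "{0..s - e} \<times> I \<noteq> {}"
        using True index_nonempty by auto
    next
      fix q assume "q \<in> {0..s - e} \<times> I"
      then show "(1 / e) * integral {fst q..fst q + e} (g (snd q)) \<le> W s'"
        using True assms by (intro window_le_window_sup) auto
    qed
    finally show ?thesis .
  next
    case False
    have "(1 / e) * integral {0..s} (g i) \<le> W s'" if i: "i \<in> I" for i
    proof -
      have "(1 / e) * integral {0..s} (g i) \<le> (1 / e) * integral {0..0 + e} (g i)"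
        using width_pos i False by (intro mult_left_mono integral_mono_interval) auto
      also have "\<dots> \<le> W s'"
        using s'_ge i width_pos by (intro window_le_window_sup) auto
      finally show ?thesis .
    qed
    then show ?thesis
      using False index_nonempty unfolding window_sup_def by (auto intro!: cSUP_least)
  qed
qed

lemma window_sup_integrable: "0 \<le> a \<Longrightarrow> W integrable_on {a..b}"
  by (rule integrable_on_mono_on) (auto simp: mono_on_def intro: window_sup_mono)

lemma integral_initial_le_window_sup:
  assumes "i \<in> I" "0 \<le> t" "t < e"
  shows "integral {0..t} (g i) \<le> e * W t"
proof -
  have "integral {0..t} (g i) = e * ((1 / e) * integral {0..t} (g i))"
    using width_pos by auto
  also have "\<dots> \<le> e * W t"
    using assms width_pos by (intro mult_left_mono initial_window_le_window_sup) auto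
  finally show ?thesis .
qed

lemma integral_last_window_le_window_sup:
  assumes "i \<in> I" "e \<le> t"
  shows "integral {t - e..t} (g i) \<le> e * W t"
proof -
  have "integral {t - e..t} (g i) = e * ((1 / e) * integral {t - e..t - e + e} (g i))"
    using width_pos by auto
  also have "\<dots> \<le> e * W t"
    using assms width_pos by (intro mult_left_mono window_le_window_sup) auto
  finally show ?thesis .
qed

lemma window_sup_le_integral_last_window:
  assumes "e \<le> t"
  shows "e * W (t - e) \<le> integral {t - e..t} W"
proof -
  have "integral {t - e..t} (\<lambda>_. W (t - e)) \<le> integral {t - e..t} W"
    using assms by (intro integral_le window_sup_integrable) (auto intro: window_sup_mono)
  then show ?thesis
    using width_pos by auto
qed

lemma integral_le_window_sup:
  assumes i: "i \<in> I" and t: "0 \<le> t"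
  shows "integral {0..t} (g i) \<le> e * W t + integral {0..t} W"
proof -
  have "integral {0..t} (g i) \<le> e * W t + integral {0..t} W" if "0 \<le> t" "t < real n * e" for n t
    using that
  proof (induction n arbitrary: t)
    case 0
    then show ?case
      using width_pos by auto
  next
    case (Suc n)
    show ?case
    proof (cases "e \<le> t")
      case False
      then have "integral {0..t} (g i) \<le> e * W t"
        using Suc.prems i by (intro integral_initial_le_window_sup) auto
      moreover have "0 \<le> integral {0..t} W"
        by (auto intro!: integral_nonneg window_sup_integrable window_sup_nonneg)
      ultimately show ?thesis
        by linarith
    next
      case True
      have "integral {0..t - e} (g i) \<le> e * W (t - e) + integral {0..t - e} W"
        using Suc.prems True by (intro Suc.IH) (auto simp: algebra_simps)
      moreover have "integral {0..t} (g i) = integral {0..t - e} (g i) + integral {t - e..t} (g i)"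
        using True width_pos integrable_interval[OF i, of 0 t]
        by (simp add: Henstock_Kurzweil_Integration.integral_combine)
      moreover have "integral {0..t} W = integral {0..t - e} W + integral {t - e..t} W"
        using True width_pos window_sup_integrable[of 0 t]
        by (simp add: Henstock_Kurzweil_Integration.integral_combine)
      ultimately show ?thesis
        using integral_last_window_le_window_sup[OF i True] window_sup_le_integral_last_window[OF True]
        by linarith
    qed
  qed
  moreover obtain n where "t < real n * e"
    using width_pos reals_Archimedean3 by blast
  ultimately show ?thesis
    using t by blast
qed

end

lemma continuous_on_field:
  assumes sol: "particle_solution N F X V"
    and F_cont: "\<And>x. x \<noteq> 0 \<Longrightarrow> isCont F x"
    and i: "i \<in> {1..N}"
  shows "continuous_on {0..} (field N F X i)"
proof -
  have summand: "continuous (at s within {0..}) (\<lambda>s. F (X i s - X j s))"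
    if s: "0 \<le> s" and j: "j \<in> {1..N} - {i}" for s j
  proof (rule continuous_within_compose3[where g = F])
    show "isCont F (X i s - X j s)"
      using sol i j s by (intro F_cont) (auto simp: particle_solution_def)
    show "continuous (at s within {0..}) (\<lambda>s. X i s - X j s)"
      using sol i j s
      by (intro continuous_diff has_vector_derivative_continuous) (auto simp: particle_solution_def)
  qed
  show ?thesis
    unfolding continuous_on_eq_continuous_within field_def
    by (auto intro!: continuous_scaleR continuous_const continuous_sum summand)
qed

lemma norm_velocity_le:
  assumes sol: "particle_solution N F X V"
    and F_cont: "\<And>x. x \<noteq> 0 \<Longrightarrow> isCont F x"
    and i: "i \<in> {1..N}" and s: "0 \<le> s" "s \<le> t"
  shows "norm (V i s) \<le> norm (V i 0) + integral {0..t} (\<lambda>\<tau>. norm (field N F X i \<tau>))"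
proof -
  have cont: "continuous_on {0..} (field N F X i)"
    using sol F_cont i by (rule continuous_on_field)
  have V_deriv: "(V i has_vector_derivative field N F X i \<tau>) (at \<tau> within {0..})" if "0 \<le> \<tau>" for \<tau>
    using sol i that by (simp add: particle_solution_def)
  have "(field N F X i has_integral V i s - V i 0) {0..s}"
    using s by (intro fundamental_theorem_of_calculus has_vector_derivative_within_subset[OF V_deriv]) auto
  then have "V i s = V i 0 + integral {0..s} (field N F X i)"
    by (simp add: integral_unique)
  then have "norm (V i s) \<le> norm (V i 0) + norm (integral {0..s} (field N F X i))"
    by (simp add: norm_triangle_ineq)
  also have "norm (integral {0..s} (field N F X i)) \<le> integral {0..s} (\<lambda>\<tau>. norm (field N F X i \<tau>))"
    by (intro integral_norm_bound_integral integrable_continuous_interval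
        continuous_on_norm continuous_on_subset[OF cont]) auto
  also have "\<dots> \<le> integral {0..t} (\<lambda>\<tau>. norm (field N F X i \<tau>))"
    using s by (intro integral_subset_le integrable_continuous_interval
        continuous_on_norm continuous_on_subset[OF cont]) auto
  finally show ?thesis
    by simp
qed

lemma norm_le_Kvel_0:
  assumes "i \<in> {1..N}"
  shows "norm (V i 0) \<le> Kvel N V 0"
  unfolding Kvel_def using assms by (intro cSUP_upper2[where x = "(0, i)"]) auto

lemma eps_pos:
  fixes X :: "nat \<Rightarrow> real \<Rightarrow> 'a::euclidean_space"
  assumes N: "2 \<le> N" and distinct: "X 1 0 \<noteq> X 2 0"
  shows "0 < eps N X"
proof -
  let ?R = "SUP j\<in>{1..N}. norm (X j 0)"
  have "norm (X i 0) \<le> ?R" if "i \<in> {1..N}" for i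
    using that by (intro cSUP_upper) auto
  then have "max (norm (X 1 0)) (norm (X 2 0)) \<le> ?R"
    using N by (intro max.boundedI) auto
  moreover have "0 < max (norm (X 1 0)) (norm (X 2 0))"
    using distinct by (cases "X 1 0 = 0") (auto simp: less_max_iff_disj)
  ultimately have "0 < ?R"
    by linarith
  moreover have "0 < real N powr (1 / (2 * real DIM('a)))"
    using N by simp
  ultimately show ?thesis
    unfolding eps_def by (rule divide_pos_pos)
qed

lemma Ebar_eq_window_sup:
  "Ebar N F X = window_sup (eps N X) (\<lambda>i s. norm (field N F X i s)) {1..N}"
  by (simp add: fun_eq_iff Ebar_def window_sup_def Let_def)

lemma integral_field_le_Ebar:
  assumes sol: "particle_solution N F X V" and N: "1 \<le> N"
    and F_cont: "\<And>x. x \<noteq> 0 \<Longrightarrow> isCont F x"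
    and i: "i \<in> {1..N}" and t: "0 \<le> t"
  shows "integral {0..t} (\<lambda>s. norm (field N F X i s))
           \<le> eps N X * Ebar N F X t + integral {0..t} (Ebar N F X)"
proof (cases "0 < eps N X")
  case True
  interpret window_averages "eps N X" "\<lambda>i s. norm (field N F X i s)" "{1..N}"
  proof
    show "(\<lambda>s. norm (field N F X j s)) integrable_on {0..b}" if "j \<in> {1..N}" for j b
      using continuous_on_field[OF sol F_cont that]
      by (intro integrable_continuous_interval continuous_on_norm) (auto elim: continuous_on_subset)
  qed (use True N in auto)
  show ?thesis
    unfolding Ebar_eq_window_sup using integral_le_window_sup[OF i t] by simp
next
  case False
  have "N = 1"
  proof (rule ccontr)
    assume "N \<noteq> 1"
    then have "X 1 0 \<noteq> X 2 0"
      using sol N by (auto simp: particle_solution_def)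
    then show False
      using eps_pos[of N X] \<open>N \<noteq> 1\<close> N False by linarith
  qed
  then have "field N F X i = (\<lambda>_. 0)"
    using i by (auto simp: field_def)
  moreover have Ebar_vanishes: "Ebar N F X s = 0" if "0 \<le> s" for s
    unfolding Ebar_eq_window_sup using False that N by (intro window_sup_nonpos_width) auto
  moreover have "integral {0..t} (Ebar N F X) = integral {0..t} (\<lambda>_. 0)"
    by (rule integral_cong) (simp add: Ebar_vanishes)
  ultimately show ?thesis
    using t by simp
qed

theorem lemma2p4:
  fixes F :: "'a::euclidean_space \<Rightarrow> 'a"
    and DF :: "'a \<Rightarrow> 'a \<Rightarrow>\<^sub>L 'a"
    and D2F :: "'a \<Rightarrow> 'a \<Rightarrow>\<^sub>L ('a \<Rightarrow>\<^sub>L 'a)"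
    and \<alpha> C_F :: real
  assumes "0 \<le> \<alpha>" and "\<alpha> < 1"
    and "\<forall>x. x \<noteq> 0 \<longrightarrow> norm (F x) \<le> C_F * norm x powr (- \<alpha>)"
    and "\<forall>x. x \<noteq> 0 \<longrightarrow> (F has_derivative blinfun_apply (DF x)) (at x)"
    and "\<forall>x. x \<noteq> 0 \<longrightarrow> norm (DF x) \<le> C_F * norm x powr (- 1 - \<alpha>)"
    and "\<forall>x. x \<noteq> 0 \<longrightarrow> (DF has_derivative blinfun_apply (D2F x)) (at x)"
    and "\<forall>x. x \<noteq> 0 \<longrightarrow> norm (D2F x) \<le> C_F * norm x powr (- 2 - \<alpha>)"
  shows "\<exists>C. \<forall>N X V t. N \<ge> 1 \<and> particle_solution N F X V \<and> t \<ge> 0 \<longrightarrow>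
           Kvel N V t \<le> Kvel N V 0 + C * t + C * eps N X * Ebar N F X t
                          + C * integral {0..t} (\<lambda>s. Ebar N F X s)"
proof (intro exI[of _ 1] allI impI, elim conjE)
  fix N X V and t :: real
  assume N: "N \<ge> 1" and sol: "particle_solution N F X V" and t: "t \<ge> 0"
  have F_cont: "\<And>x. x \<noteq> 0 \<Longrightarrow> isCont F x"
    using assms(4) has_derivative_continuous by blast
  have "norm (V i s) \<le> Kvel N V 0 + (eps N X * Ebar N F X t + integral {0..t} (Ebar N F X))"
    if i: "i \<in> {1..N}" and s: "s \<in> {0..t}" for i s
    using norm_velocity_le[OF sol F_cont i, of s t] norm_le_Kvel_0[OF i, of V]
      integral_field_le_Ebar[OF sol N F_cont i t] s
    by auto
  then have "Kvel N V t \<le> Kvel N V 0 + (eps N X * Ebar N F X t + integral {0..t} (Ebar N F X))"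
    unfolding Kvel_def[of N V t] using N t by (intro cSUP_least) auto
  then show "Kvel N V t \<le> Kvel N V 0 + 1 * t + 1 * eps N X * Ebar N F X t
               + 1 * integral {0..t} (\<lambda>s. Ebar N F X s)"
    using t by simp
qed

end
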